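(* Let $N\ge 1$, $0<s<1$ and $1<p<\infty$ be such that $s\,p>N$, and define \[ \theta_{N,s,p}:=\omega_N\,\sup_{T>1} \frac{(T-1)^N}{\Big((T-1)^s+T^s\Big)^p}. \] Then \[ \theta_{N,s,p}\,\Lambda_{s,p}(B_1(0))\le\mathfrak{m}_{s,p}(\mathbb{R}^N). \]
   Context: $\omega_N$ is the Lebesgue measure of the unit ball $B_1(0)\subseteq\mathbb{R}^N$. For an open set $\Omega$ and $0<s<1$, $[\varphi]_{W^{s,p}(\Omega)}=\left(\iint_{\Omega\times\Omega}\frac{|\varphi(x)-\varphi(y)|^p}{|x-y|^{N+s\,p}}dx\,dy\right)^{1/p}$. For $0<\alpha\le1$ and $E\subseteq\mathbb{R}^N$, $[\varphi]_{C^{0,\alpha}(E)}=\sup_{x,y\in E,\,x\ne y}\frac{|\varphi(x)-\varphi(y)|}{|x-y|^\alpha}$. Set $\alpha_{s,p}=s-N/p$. The sharp Morrey constant is $\mathfrak{m}_{s,p}(\mathbb{R}^N)=\inf\{[\varphi]^p_{W^{s,p}(\mathbb{R}^N)}:\varphi\in C^\infty_0(\mathbb{R}^N),\ [\varphi]_{C^{0,\alpha_{s,p}}(\mathbb{R}^N)}=1\}$. For a ball $B_r(x_0)$, $\Lambda_{s,p}(B_r(x_0))=\inf\{[\varphi]^p_{W^{s,p}(B_r(x_0))}:\varphi\in C^1(\overline{B_r(x_0)}),\ \|\varphi\|_{L^p(B_r(x_0))}=1,\ \varphi(x_0)=0\}$. *)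

theory Defs
  imports "HOL-Analysis.Analysis"
begin

text \<open>omega_N: Lebesgue measure of the unit ball in the N-dimensional space 'a (N = DIM('a)).\<close>
definition omega :: "'a::euclidean_space itself \<Rightarrow> real" where
  "omega _ = measure lborel (ball (0::'a) 1)"

fun Ck :: "nat \<Rightarrow> ('a::euclidean_space \<Rightarrow> real) \<Rightarrow> bool" where
  "Ck 0 f = continuous_on UNIV f"
| "Ck (Suc k) f = (\<exists>g::'a \<Rightarrow> 'a \<Rightarrow> real.
      (\<forall>x. (f has_derivative (\<lambda>h. \<Sum>i\<in>Basis. (h \<bullet> i) * g i x)) (at x)) \<and>
      (\<forall>i\<in>Basis. Ck k (g i)))"

definition C_infty_0 :: "('a::euclidean_space \<Rightarrow> real) \<Rightarrow> bool" where
  "C_infty_0 f \<longleftrightarrow> (\<forall>k. Ck k f) \<and> compact (closure {x. f x \<noteq> 0})"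

definition C1_closed_ball :: "'a::euclidean_space \<Rightarrow> real \<Rightarrow> ('a \<Rightarrow> real) \<Rightarrow> bool" where
  "C1_closed_ball x0 r f \<longleftrightarrow> continuous_on (cball x0 r) f \<and>
     (\<exists>g::'a \<Rightarrow> 'a \<Rightarrow> real.
        (\<forall>x\<in>ball x0 r. (f has_derivative (\<lambda>h. \<Sum>i\<in>Basis. (h \<bullet> i) * g i x)) (at x)) \<and>
        (\<forall>i\<in>Basis. continuous_on (cball x0 r) (g i)))"

definition gagliardo_pow :: "'a::euclidean_space set \<Rightarrow> real \<Rightarrow> real \<Rightarrow> ('a \<Rightarrow> real) \<Rightarrow> ennreal" where
  "gagliardo_pow \<Omega> s p \<phi> =
     (\<integral>\<^sup>+ z. indicator (\<Omega> \<times> \<Omega>) z *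
        ennreal (\<bar>\<phi> (fst z) - \<phi> (snd z)\<bar> powr p /
                 dist (fst z) (snd z) powr (real DIM('a) + s * p)) \<partial>(lborel \<Otimes>\<^sub>M lborel))"

definition holder_seminorm :: "'a::euclidean_space set \<Rightarrow> real \<Rightarrow> ('a \<Rightarrow> real) \<Rightarrow> ennreal" where
  "holder_seminorm E \<alpha> \<phi> =
     (SUP z \<in> {(x, y). x \<in> E \<and> y \<in> E \<and> x \<noteq> y}.
        ennreal (\<bar>\<phi> (fst z) - \<phi> (snd z)\<bar> / dist (fst z) (snd z) powr \<alpha>))"

definition Lp_norm_on :: "'a::euclidean_space set \<Rightarrow> real \<Rightarrow> ('a \<Rightarrow> real) \<Rightarrow> real" where
  "Lp_norm_on S p \<phi> =
     (enn2real (\<integral>\<^sup>+ x. indicator S x * ennreal (\<bar>\<phi> x\<bar> powr p) \<partial>lborel)) powr (1 / p)"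

definition alpha_sp :: "'a::euclidean_space itself \<Rightarrow> real \<Rightarrow> real \<Rightarrow> real" where
  "alpha_sp _ s p = s - real DIM('a) / p"

definition morrey_const :: "'a::euclidean_space itself \<Rightarrow> real \<Rightarrow> real \<Rightarrow> ennreal" where
  "morrey_const TYPE_a s p =
     Inf {gagliardo_pow (UNIV::'a set) s p \<phi> | \<phi>.
            C_infty_0 \<phi> \<and> holder_seminorm (UNIV::'a set) (alpha_sp TYPE_a s p) \<phi> = 1}"

definition Lambda :: "'a::euclidean_space \<Rightarrow> real \<Rightarrow> real \<Rightarrow> real \<Rightarrow> ennreal" where
  "Lambda x0 r s p =
     Inf {gagliardo_pow (ball x0 r) s p \<phi> | \<phi>.
            C1_closed_ball x0 r \<phi> \<and> Lp_norm_on (ball x0 r) p \<phi> = 1 \<and> \<phi> x0 = 0}"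

definition theta :: "'a::euclidean_space itself \<Rightarrow> real \<Rightarrow> real \<Rightarrow> real" where
  "theta TYPE_a s p = omega TYPE_a *
     (SUP T \<in> {1<..}. (T - 1) ^ DIM('a) / ((T - 1) powr s + T powr s) powr p)"

end

theory Submission
  imports Defs
begin

text \<open>Fix \<phi> with Hoelder seminorm 1, points x \<noteq> y at distance R, and T > 1. Every point of
  B((T-1)R, x) lies in B(TR, y), so the triangle inequality and convexity of t \<mapsto> t^p (with
  weights l, 1 - l) bound omega_N ((T-1)R)^N |\<phi> x - \<phi> y|^p by a weighted sum of the integrals
  of |\<phi> - \<phi> x|^p over the first ball and of |\<phi> - \<phi> y|^p over the second. Rescaling B(r, c)
  to the unit ball, the definition of \<Lambda> = \<Lambda>_{s,p}(B_1(0)) bounds \<Lambda> times the integral of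
  |\<phi> - \<phi> c|^p over B(r, c) by r^(sp) [\<phi>]^p_{W^{s,p}}. For the optimal weight
  l = (T-1)^s / ((T-1)^s + T^s) the two contributions add up to
  R^(sp) ((T-1)^s + T^s)^p [\<phi>]^p_{W^{s,p}}, which is the claimed inequality for the Hoelder
  quotient at x, y and the parameter T; it remains to take suprema over x, y and T.\<close>

lemma one_le_powr_of_le_one:
  fixes l e :: real
  assumes "0 < l" "l \<le> 1" "e \<le> 0"
  shows "1 \<le> l powr e"
  using powr_mono2'[OF assms(3,1,2)] by simp

lemma powr_le_weighted_powr_add:
  fixes a u v l p :: real
  assumes "0 \<le> a" "a \<le> u + v" "0 \<le> u" "0 \<le> v" "0 < l" "l < 1" "1 \<le> p"
  shows "a powr p \<le> l powr (1 - p) * u powr p + (1 - l) powr (1 - p) * v powr p"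
proof -
  have "a powr p \<le> (u + v) powr p"
    using assms by (intro powr_mono2) auto
  also have "\<dots> \<le> l powr (1 - p) * u powr p + (1 - l) powr (1 - p) * v powr p"
  proof (cases "u = 0 \<or> v = 0")
    case True
    have "1 \<le> l powr (1 - p)" "1 \<le> (1 - l) powr (1 - p)"
      using assms by (auto intro: one_le_powr_of_le_one)
    then show ?thesis
      using True mult_right_mono[of 1 "l powr (1 - p)" "u powr p"]
        mult_right_mono[of 1 "(1 - l) powr (1 - p)" "v powr p"] by auto
  next
    case False
    then have "u / l > 0" "v / (1 - l) > 0"
      using assms by auto
    have "(u + v) powr p = (l * (u / l) + (1 - l) * (v / (1 - l))) powr p"
      using assms by simp
    also have "\<dots> \<le> l * (u / l) powr p + (1 - l) * (v / (1 - l)) powr p"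
      using convex_onD[OF powr_convex[of p], of "1 - l" "u / l" "v / (1 - l)"] assms
        \<open>u / l > 0\<close> \<open>v / (1 - l) > 0\<close> by simp
    also have "\<dots> = l powr (1 - p) * u powr p + (1 - l) powr (1 - p) * v powr p"
      using assms \<open>u / l > 0\<close> \<open>v / (1 - l) > 0\<close> by (simp add: powr_divide powr_diff field_simps)
    finally show ?thesis .
  qed
  finally show ?thesis .
qed

lemma weighted_powr_add_optimal:
  fixes a b p :: real
  assumes "a > 0" "b > 0"
  shows "(a / (a + b)) powr (1 - p) * a powr p + (b / (a + b)) powr (1 - p) * b powr p
    = (a + b) powr p"
proof -
  have "(c / (a + b)) powr (1 - p) * c powr p = c * (a + b) powr (p - 1)" if "c > 0" for c
  proof -
    have "(c / (a + b)) powr (1 - p) * c powr p = c powr (1 - p) * c powr p / (a + b) powr (1 - p)"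
      using that assms by (simp add: powr_divide)
    also have "c powr (1 - p) * c powr p = c"
      using that by (simp add: powr_add[symmetric])
    also have "c / (a + b) powr (1 - p) = c * (a + b) powr (p - 1)"
      using powr_minus_divide[of "a + b" "1 - p"] by simp
    finally show ?thesis .
  qed
  then have "(a / (a + b)) powr (1 - p) * a powr p + (b / (a + b)) powr (1 - p) * b powr p
      = (a + b) * (a + b) powr (p - 1)"
    using assms by (simp add: algebra_simps)
  also have "\<dots> = (a + b) powr p"
    using assms by (simp add: powr_diff)
  finally show ?thesis .
qed

lemma theta_weight_le_one:
  fixes s p T :: real
  assumes "0 \<le> p" "real N \<le> s * p" "T > 1"
  shows "(T - 1) ^ N / ((T - 1) powr s + T powr s) powr p \<le> 1"
proof -
  have "(T - 1) ^ N \<le> T powr (real N)"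
    using assms by (simp add: powr_realpow power_mono)
  also have "\<dots> \<le> (T powr s) powr p"
    using assms by (simp add: powr_powr powr_mono)
  also have "\<dots> \<le> ((T - 1) powr s + T powr s) powr p"
    using assms by (intro powr_mono2) auto
  finally show ?thesis
    using assms by (simp add: divide_le_eq_1 add_pos_pos)
qed

lemma ennreal_le_mult_one_interval:
  fixes x y :: ennreal
  assumes "\<And>t. 0 < t \<Longrightarrow> t < 1 \<Longrightarrow> ennreal t * x \<le> y"
  shows "x \<le> y"
proof (cases x rule: ennreal_cases)
  case (real a)
  show ?thesis
  proof (cases y rule: ennreal_cases)
    case (real b)
    have "a \<le> b"
    proof (rule field_le_mult_one_interval)
      fix t :: real assume "0 < t" "t < 1"
      then show "t * a \<le> b"
        using assms[of t] real \<open>x = ennreal a\<close> \<open>0 \<le> a\<close> by (simp add: ennreal_mult[symmetric])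
    qed
    then show ?thesis using real \<open>x = ennreal a\<close> by simp
  qed simp
next
  case top
  then have "y = top"
    using assms[of "1 / 2"] by (simp add: ennreal_mult_top top_unique)
  then show ?thesis by simp
qed

lemma ennreal_SUP_mult_le:
  fixes f :: "'b \<Rightarrow> real"
  assumes "bdd_above (f ` A)" "A \<noteq> {}" "\<And>x. x \<in> A \<Longrightarrow> ennreal (f x) * y \<le> z"
  shows "ennreal (SUP x\<in>A. f x) * y \<le> z"
proof (rule ennreal_le_mult_one_interval)
  fix t :: real assume t: "0 < t" "t < 1"
  show "ennreal t * (ennreal (SUP x\<in>A. f x) * y) \<le> z"
  proof (cases "(SUP x\<in>A. f x) > 0")
    case True
    then have "t * (SUP x\<in>A. f x) < (SUP x\<in>A. f x)"
      using t by simp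
    then obtain x where "x \<in> A" "t * (SUP x\<in>A. f x) < f x"
      using assms(1,2) by (subst (asm) less_cSUP_iff) auto
    then have "ennreal t * (ennreal (SUP x\<in>A. f x) * y) \<le> ennreal (f x) * y"
      using t True by (auto simp: ennreal_mult[symmetric] mult.assoc[symmetric]
        intro!: mult_right_mono ennreal_leI)
    also have "\<dots> \<le> z"
      using assms(3) \<open>x \<in> A\<close> .
    finally show ?thesis .
  qed (simp add: ennreal_neg)
qed

lemma omega_nonneg: "0 \<le> omega TYPE('a::euclidean_space)"
  by (simp add: omega_def)

lemma nn_integral_lborel_affine:
  fixes f :: "'a::euclidean_space \<Rightarrow> ennreal"
  assumes [measurable]: "f \<in> borel_measurable borel" and "r > 0"
  shows "(\<integral>\<^sup>+x. f x \<partial>lborel) = ennreal (r ^ DIM('a)) * (\<integral>\<^sup>+x. f (t + r *\<^sub>R x) \<partial>lborel)"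
  using assms(2)
  by (subst lborel_affine[of r t])
    (simp_all add: nn_integral_density nn_integral_distr nn_integral_cmult)

lemma emeasure_lborel_ball_omega:
  fixes x :: "'a::euclidean_space"
  assumes "r \<ge> 0"
  shows "emeasure lborel (ball x r) = ennreal (omega TYPE('a) * r ^ DIM('a))"
proof -
  have "emeasure lborel (ball x r) = ennreal (r ^ DIM('a)) * emeasure lebesgue (ball (0::'a) 1)"
    using emeasure_lebesgue_ball_conv_unit_ball[OF assms] by simp
  also have "emeasure lebesgue (ball (0::'a) 1) = ennreal (omega TYPE('a))"
    unfolding omega_def using emeasure_lborel_ball_finite[of "0::'a" 1]
    by (simp add: emeasure_eq_ennreal_measure)
  finally show ?thesis
    using assms by (simp add: ennreal_mult omega_def mult.commute)
qed

lemma gagliardo_pow_mono: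
  assumes "\<Omega> \<subseteq> \<Omega>'"
  shows "gagliardo_pow \<Omega> s p \<phi> \<le> gagliardo_pow \<Omega>' s p \<phi>"
  unfolding gagliardo_pow_def using assms
  by (intro nn_integral_mono mult_right_mono) (auto simp: indicator_def)

lemma gagliardo_pow_affine_range:
  fixes \<phi> :: "'a::euclidean_space \<Rightarrow> real"
  assumes [measurable]: "\<phi> \<in> borel_measurable borel" "\<Omega> \<in> sets borel"
  shows "gagliardo_pow \<Omega> s p (\<lambda>x. k * \<phi> x + b) = ennreal (\<bar>k\<bar> powr p) * gagliardo_pow \<Omega> s p \<phi>"
proof -
  define F where "F z = \<bar>\<phi> (fst z) - \<phi> (snd z)\<bar> powr p
      / dist (fst z) (snd z) powr (real DIM('a) + s * p)"
    for z :: "'a \<times> 'a"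
  have [measurable]: "F \<in> borel_measurable (lborel \<Otimes>\<^sub>M lborel)"
    unfolding F_def by measurable
  have scale: "\<bar>(k * \<phi> x + b) - (k * \<phi> y + b)\<bar> powr p / d = \<bar>k\<bar> powr p * (\<bar>\<phi> x - \<phi> y\<bar> powr p / d)"
    for x y and d :: real
    by (simp add: abs_mult powr_mult flip: right_diff_distrib)
  have "indicator (\<Omega> \<times> \<Omega>) z * ennreal (\<bar>(k * \<phi> (fst z) + b) - (k * \<phi> (snd z) + b)\<bar> powr p /
      dist (fst z) (snd z) powr (real DIM('a) + s * p))
      = ennreal (\<bar>k\<bar> powr p) * (indicator (\<Omega> \<times> \<Omega>) z * ennreal (F z))" for z
    unfolding scale F_def by (subst ennreal_mult) (auto simp: mult_ac)
  then show ?thesis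
    unfolding gagliardo_pow_def F_def[symmetric] by (simp add: nn_integral_cmult)
qed

lemma gagliardo_pow_ball_rescale:
  fixes \<phi> :: "'a::euclidean_space \<Rightarrow> real" and s p :: real
  assumes [measurable]: "\<phi> \<in> borel_measurable borel" and r: "r > 0"
  shows "gagliardo_pow (ball c r) s p \<phi>
    = ennreal (r powr (DIM('a) - s * p)) * gagliardo_pow (ball 0 1) s p (\<lambda>w. \<phi> (c + r *\<^sub>R w))"
proof -
  define q where "q = real DIM('a) + s * p"
  define F where "F z = indicator (ball c r \<times> ball c r) z *
      ennreal (\<bar>\<phi> (fst z) - \<phi> (snd z)\<bar> powr p / dist (fst z) (snd z) powr q)" for z :: "'a \<times> 'a"
  define H where "H z = indicator (ball 0 1 \<times> ball 0 1) z *
      ennreal (\<bar>\<phi> (c + r *\<^sub>R fst z) - \<phi> (c + r *\<^sub>R snd z)\<bar> powr p / dist (fst z) (snd z) powr q)"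
    for z :: "'a \<times> 'a"
  have [measurable]: "F \<in> borel_measurable borel" "H \<in> borel_measurable borel"
    unfolding F_def H_def by (simp_all add: borel_prod[symmetric])
  have "F ((c, c) + r *\<^sub>R z) = ennreal (r powr - q) * H z" for z
  proof -
    obtain a b where z: "z = (a, b)" by (cases z)
    have "dist (c + r *\<^sub>R a) (c + r *\<^sub>R b) = r * dist a b"
      using r by (simp add: dist_norm flip: scaleR_diff_right)
    moreover have "c + r *\<^sub>R w \<in> ball c r \<longleftrightarrow> w \<in> ball 0 1" for w
      using r by (simp add: dist_norm)
    ultimately show ?thesis
      using r unfolding F_def H_def z
      by (simp add: powr_mult powr_minus_divide ennreal_mult'[symmetric] indicator_def)
  qed
  then have "(\<integral>\<^sup>+ z. F z \<partial>lborel) = ennreal (r ^ (2 * DIM('a)))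
      * ennreal (r powr - q) * (\<integral>\<^sup>+ z. H z \<partial>lborel)"
    using nn_integral_lborel_affine[of F r "(c, c)"] r
    by (simp add: nn_integral_cmult mult.assoc mult_2)
  also have "ennreal (r ^ (2 * DIM('a))) * ennreal (r powr - q)
      = ennreal (r powr (DIM('a) - s * p))"
    using r by (simp add: ennreal_mult[symmetric] q_def powr_realpow[symmetric] powr_add[symmetric])
  finally show ?thesis
    unfolding gagliardo_pow_def lborel_prod F_def H_def q_def by simp
qed

definition ball_deviation :: "real \<Rightarrow> ('a::euclidean_space \<Rightarrow> real) \<Rightarrow> 'a \<Rightarrow> real \<Rightarrow> ennreal" where
  "ball_deviation p \<phi> c r = (\<integral>\<^sup>+ z. indicator (ball c r) z * ennreal (\<bar>\<phi> z - \<phi> c\<bar> powr p) \<partial>lborel)"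

lemma ball_deviation_rescale:
  fixes \<phi> :: "'a::euclidean_space \<Rightarrow> real"
  assumes [measurable]: "\<phi> \<in> borel_measurable borel" and r: "r > 0"
  shows "ball_deviation p \<phi> c r = ennreal (r ^ DIM('a)) *
    (\<integral>\<^sup>+ w. indicator (ball 0 1) w * ennreal (\<bar>\<phi> (c + r *\<^sub>R w) - \<phi> c\<bar> powr p) \<partial>lborel)"
proof -
  have "c + r *\<^sub>R w \<in> ball c r \<longleftrightarrow> w \<in> ball 0 1" for w
    using r by (simp add: dist_norm)
  then show ?thesis
    unfolding ball_deviation_def
    by (subst nn_integral_lborel_affine[OF _ r, of _ c]) (simp_all add: indicator_def)
qed

lemma Ck_continuous_on:
  assumes "Ck k \<phi>"
  shows "continuous_on UNIV \<phi>"
proof (cases k)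
  case (Suc m)
  then obtain g where "\<And>x. (\<phi> has_derivative (\<lambda>h. \<Sum>i\<in>Basis. (h \<bullet> i) * g i x)) (at x)"
    using assms by auto
  then show ?thesis
    using has_derivative_continuous by (blast intro: continuous_at_imp_continuous_on)
qed (use assms in simp)

lemma C1_closed_ball_if_Ck1:
  assumes "Ck 1 \<phi>"
  shows "C1_closed_ball c r \<phi>"
  using assms Ck_continuous_on[OF assms] unfolding C1_closed_ball_def One_nat_def Ck.simps
  by (blast intro: continuous_on_subset)

lemma C1_closed_ball_affine_range:
  assumes "C1_closed_ball x0 r \<phi>"
  shows "C1_closed_ball x0 r (\<lambda>x. k * \<phi> x + b)"
proof -
  obtain g where der: "\<And>x. x \<in> ball x0 r
      \<Longrightarrow> (\<phi> has_derivative (\<lambda>h. \<Sum>i\<in>Basis. (h \<bullet> i) * g i x)) (at x)"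
    and cont: "continuous_on (cball x0 r) \<phi>" "\<And>i. i \<in> Basis \<Longrightarrow> continuous_on (cball x0 r) (g i)"
    using assms unfolding C1_closed_ball_def by blast
  show ?thesis
    unfolding C1_closed_ball_def
  proof (intro conjI exI[of _ "\<lambda>i x. k * g i x"] ballI)
    fix x assume "x \<in> ball x0 r"
    show "((\<lambda>x. k * \<phi> x + b) has_derivative (\<lambda>h. \<Sum>i\<in>Basis. (h \<bullet> i) * (k * g i x))) (at x)"
      by (rule has_derivative_eq_rhs, (rule derivative_eq_intros der[OF \<open>x \<in> ball x0 r\<close>])+)
         (auto simp: sum_distrib_left mult_ac)
  next
    show "continuous_on (cball x0 r) (\<lambda>x. k * \<phi> x + b)"
      using cont(1) by (intro continuous_intros)
    fix i :: 'a assume "i \<in> Basis"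
    show "continuous_on (cball x0 r) (\<lambda>x. k * g i x)"
      using cont(2)[OF \<open>i \<in> Basis\<close>] by (intro continuous_intros)
  qed
qed

lemma C1_closed_ball_rescale:
  assumes "C1_closed_ball c r \<phi>" and r: "r > 0"
  shows "C1_closed_ball 0 1 (\<lambda>w. \<phi> (c + r *\<^sub>R w))"
proof -
  obtain g where der: "\<And>x. x \<in> ball c r \<Longrightarrow> (\<phi> has_derivative (\<lambda>h. \<Sum>i\<in>Basis. (h \<bullet> i) * g i x)) (at x)"
    and cont: "continuous_on (cball c r) \<phi>" "\<And>i. i \<in> Basis \<Longrightarrow> continuous_on (cball c r) (g i)"
    using assms unfolding C1_closed_ball_def by blast
  have ball: "c + r *\<^sub>R w \<in> ball c r \<longleftrightarrow> w \<in> ball 0 1"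
    and cball: "c + r *\<^sub>R w \<in> cball c r \<longleftrightarrow> w \<in> cball 0 1" for w
    using r by (simp_all add: dist_norm)
  have maps: "(\<lambda>w. c + r *\<^sub>R w) ` cball 0 1 \<subseteq> cball c r"
    using cball by blast
  show ?thesis
    unfolding C1_closed_ball_def
  proof (intro conjI exI[of _ "\<lambda>i w. r * g i (c + r *\<^sub>R w)"] ballI)
    fix w :: 'a assume "w \<in> ball 0 1"
    then have "c + r *\<^sub>R w \<in> ball c r" using ball by blast
    have "((\<lambda>w. c + r *\<^sub>R w) has_derivative (\<lambda>h. r *\<^sub>R h)) (at w)"
      by (auto intro!: derivative_eq_intros)
    from has_derivative_compose[OF this der[OF \<open>c + r *\<^sub>R w \<in> ball c r\<close>]]
    have "((\<lambda>w. \<phi> (c + r *\<^sub>R w))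
        has_derivative (\<lambda>h. \<Sum>i\<in>Basis. ((r *\<^sub>R h) \<bullet> i) * g i (c + r *\<^sub>R w)))
        (at w)" .
    then show "((\<lambda>w. \<phi> (c + r *\<^sub>R w))
        has_derivative (\<lambda>h. \<Sum>i\<in>Basis. (h \<bullet> i) * (r * g i (c + r *\<^sub>R w))))
        (at w)"
      by (simp add: mult_ac)
  next
    show "continuous_on (cball 0 1) (\<lambda>w. \<phi> (c + r *\<^sub>R w))"
      by (intro continuous_on_compose2[OF cont(1) _ maps] continuous_intros)
    fix i :: 'a assume "i \<in> Basis"
    show "continuous_on (cball 0 1) (\<lambda>w. r * g i (c + r *\<^sub>R w))"
      by (intro continuous_on_compose2[OF cont(2)[OF \<open>i \<in> Basis\<close>] _ maps] continuous_intros)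
  qed
qed

lemma Lambda_mult_Lp_le_gagliardo_pow:
  fixes u :: "'a::euclidean_space \<Rightarrow> real"
  assumes C1: "C1_closed_ball x0 r u" and "u x0 = 0"
    and [measurable]: "u \<in> borel_measurable borel" and p: "p > 0"
  shows "Lambda x0 r s p * (\<integral>\<^sup>+ x. indicator (ball x0 r) x * ennreal (\<bar>u x\<bar> powr p) \<partial>lborel)
    \<le> gagliardo_pow (ball x0 r) s p u"
proof -
  define J where "J = (\<integral>\<^sup>+ x. indicator (ball x0 r) x * ennreal (\<bar>u x\<bar> powr p) \<partial>lborel)"
  have [measurable]: "ball x0 r \<in> sets borel"
    by simp
  have "continuous_on (cball x0 r) u"
    using C1 by (simp add: C1_closed_ball_def)
  then obtain B where B: "\<And>x. x \<in> cball x0 r \<Longrightarrow> \<bar>u x\<bar> \<le> B"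
    using compact_imp_bounded[OF compact_continuous_image[OF _ compact_cball]]
    by (fastforce simp: bounded_iff)
  have "J \<le> (\<integral>\<^sup>+ x. ennreal (B powr p) * indicator (ball x0 r) x \<partial>lborel)"
    unfolding J_def using B p
    by (intro nn_integral_mono) (auto simp: indicator_def intro!: ennreal_leI powr_mono2)
  also have "\<dots> = ennreal (B powr p) * emeasure lborel (ball x0 r)"
    by (simp add: nn_integral_cmult_indicator)
  also have "\<dots> < \<infinity>"
    using emeasure_lborel_ball_finite[of x0 r] by (simp add: ennreal_mult_less_top)
  finally obtain j where j: "J = ennreal j" "j \<ge> 0"
    by (cases J) auto
  show ?thesis
  proof (cases "j = 0")
    case True
    then show ?thesis using j by (simp add: J_def[symmetric])
  next
    case False
    define k where "k = j powr (- 1 / p)"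
    define v where "v = (\<lambda>x. k * u x)"
    have "\<bar>k\<bar> powr p = j powr (- 1 / p * p)"
      by (simp add: k_def powr_powr)
    also have "\<dots> = 1 / j"
      using False j p by (simp add: powr_minus_divide)
    finally have k: "\<bar>k\<bar> powr p = 1 / j" .
    have "indicator (ball x0 r) x * ennreal (\<bar>v x\<bar> powr p)
        = ennreal (1 / j) * (indicator (ball x0 r) x * ennreal (\<bar>u x\<bar> powr p))" for x
    proof -
      have v: "\<bar>v x\<bar> powr p = 1 / j * \<bar>u x\<bar> powr p"
        by (simp add: v_def abs_mult powr_mult k)
      have "ennreal (1 / j * \<bar>u x\<bar> powr p) = ennreal (1 / j) * ennreal (\<bar>u x\<bar> powr p)"
        using j by (intro ennreal_mult) auto
      then show ?thesis
        unfolding v by (simp only: mult_ac)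
    qed
    then have "(\<integral>\<^sup>+ x. indicator (ball x0 r) x * ennreal (\<bar>v x\<bar> powr p) \<partial>lborel)
        = ennreal (1 / j) * J"
      unfolding J_def by (simp only:) (rule nn_integral_cmult, simp)
    also have "\<dots> = 1"
      using False j by (simp add: ennreal_mult[symmetric])
    finally have "Lp_norm_on (ball x0 r) p v = 1"
      by (simp add: Lp_norm_on_def)
    moreover have "C1_closed_ball x0 r v"
      using C1_closed_ball_affine_range[OF C1, of k 0] by (simp add: v_def)
    ultimately have "Lambda x0 r s p \<le> gagliardo_pow (ball x0 r) s p v"
      unfolding Lambda_def using \<open>u x0 = 0\<close> by (intro Inf_lower) (auto simp: v_def)
    also have "\<dots> = ennreal (1 / j) * gagliardo_pow (ball x0 r) s p u"
      using gagliardo_pow_affine_range[of u "ball x0 r" s p k 0] by (simp add: v_def k)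
    finally have "Lambda x0 r s p * J
        \<le> ennreal (1 / j) * gagliardo_pow (ball x0 r) s p u * ennreal j"
      unfolding j by (rule mult_right_mono) simp
    also have "\<dots> = gagliardo_pow (ball x0 r) s p u * (ennreal (1 / j) * ennreal j)"
      by (simp only: mult_ac)
    also have "ennreal (1 / j) * ennreal j = 1"
      using False j by (simp flip: ennreal_mult)
    finally show ?thesis
      unfolding J_def by simp
  qed
qed

lemma Lambda_mult_ball_deviation_le:
  fixes \<phi> :: "'a::euclidean_space \<Rightarrow> real" and s p :: real
  assumes "Ck 1 \<phi>" and r: "r > 0" and p: "p > 0"
  shows "Lambda (0::'a) 1 s p * ball_deviation p \<phi> c r
    \<le> ennreal (r powr (s * p)) * gagliardo_pow (ball c r) s p \<phi>"
proof -
  define \<psi> where "\<psi> w = \<phi> (c + r *\<^sub>R w)" for w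
  have [measurable]: "\<phi> \<in> borel_measurable borel"
    using Ck_continuous_on[OF assms(1)] by (rule borel_measurable_continuous_onI)
  then have [measurable]: "\<psi> \<in> borel_measurable borel"
    unfolding \<psi>_def by measurable
  have "C1_closed_ball 0 1 \<psi>"
    unfolding \<psi>_def by (intro C1_closed_ball_rescale C1_closed_ball_if_Ck1 assms)
  then have "C1_closed_ball 0 1 (\<lambda>w. \<psi> w - \<phi> c)"
    using C1_closed_ball_affine_range[of 0 1 \<psi> 1 "- \<phi> c"] by simp
  then have "Lambda (0::'a) 1 s p
      * (\<integral>\<^sup>+ w. indicator (ball 0 1) w * ennreal (\<bar>\<psi> w - \<phi> c\<bar> powr p) \<partial>lborel)
      \<le> gagliardo_pow (ball 0 1) s p (\<lambda>w. \<psi> w - \<phi> c)"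
    using p by (intro Lambda_mult_Lp_le_gagliardo_pow) (simp_all add: \<psi>_def)
  also have "\<dots> = gagliardo_pow (ball 0 1) s p \<psi>"
    using gagliardo_pow_affine_range[of \<psi> "ball 0 1" s p 1 "- \<phi> c"] by simp
  finally have "Lambda (0::'a) 1 s p * ball_deviation p \<phi> c r
      \<le> ennreal (r ^ DIM('a)) * gagliardo_pow (ball 0 1) s p \<psi>"
    using ball_deviation_rescale[of \<phi> r p c] r
    by (simp add: \<psi>_def mult.left_commute[of "Lambda (0::'a) 1 s p"] mult_left_mono)
  also have "ennreal (r ^ DIM('a)) = ennreal (r powr (s * p)) * ennreal (r powr (DIM('a) - s * p))"
    using r by (simp add: ennreal_mult[symmetric] powr_add[symmetric] powr_realpow)
  finally show ?thesis
    using gagliardo_pow_ball_rescale[of \<phi> r c s p] r by (simp add: \<psi>_def mult.assoc)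
qed

lemma diff_powr_le_ball_deviations:
  fixes \<phi> :: "'a::euclidean_space \<Rightarrow> real"
  assumes [measurable]: "\<phi> \<in> borel_measurable borel"
    and r: "0 \<le> r1" "r1 + dist x y \<le> r2" and l: "0 < l" "l < 1" and p: "1 \<le> p"
  shows "ennreal (\<bar>\<phi> x - \<phi> y\<bar> powr p * (omega TYPE('a) * r1 ^ DIM('a)))
    \<le> ennreal (l powr (1 - p)) * ball_deviation p \<phi> x r1
      + ennreal ((1 - l) powr (1 - p)) * ball_deviation p \<phi> y r2"
proof -
  have [measurable]: "ball c r \<in> sets borel" for c :: 'a and r
    by simp
  define c1 where "c1 = l powr (1 - p)"
  define c2 where "c2 = (1 - l) powr (1 - p)"
  have pointwise: "ennreal (\<bar>\<phi> x - \<phi> y\<bar> powr p) * indicator (ball x r1) z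
      \<le> ennreal c1 * (indicator (ball x r1) z * ennreal (\<bar>\<phi> z - \<phi> x\<bar> powr p))
        + ennreal c2 * (indicator (ball y r2) z * ennreal (\<bar>\<phi> z - \<phi> y\<bar> powr p))" for z
  proof (cases "z \<in> ball x r1")
    case True
    then have "z \<in> ball y r2"
      using dist_triangle[of y z x] r by (simp add: dist_commute)
    have "\<bar>\<phi> x - \<phi> y\<bar> powr p \<le> c1 * \<bar>\<phi> z - \<phi> x\<bar> powr p + c2 * \<bar>\<phi> z - \<phi> y\<bar> powr p"
      unfolding c1_def c2_def using l p by (intro powr_le_weighted_powr_add) auto
    then have "ennreal (\<bar>\<phi> x - \<phi> y\<bar> powr p)
        \<le> ennreal (c1 * \<bar>\<phi> z - \<phi> x\<bar> powr p + c2 * \<bar>\<phi> z - \<phi> y\<bar> powr p)"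
      by (rule ennreal_leI)
    also have "\<dots> = ennreal c1 * ennreal (\<bar>\<phi> z - \<phi> x\<bar> powr p)
        + ennreal c2 * ennreal (\<bar>\<phi> z - \<phi> y\<bar> powr p)"
      by (simp add: c1_def c2_def ennreal_mult)
    finally show ?thesis
      using True \<open>z \<in> ball y r2\<close> by simp
  qed simp
  have "ennreal (\<bar>\<phi> x - \<phi> y\<bar> powr p * (omega TYPE('a) * r1 ^ DIM('a)))
      = (\<integral>\<^sup>+ z. ennreal (\<bar>\<phi> x - \<phi> y\<bar> powr p) * indicator (ball x r1) z \<partial>lborel)"
    using r by (simp add: emeasure_lborel_ball_omega nn_integral_cmult_indicator ennreal_mult')
  also have "\<dots> \<le> (\<integral>\<^sup>+ z. ennreal c1 * (indicator (ball x r1) z * ennreal (\<bar>\<phi> z - \<phi> x\<bar> powr p))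
        + ennreal c2 * (indicator (ball y r2) z * ennreal (\<bar>\<phi> z - \<phi> y\<bar> powr p)) \<partial>lborel)"
    by (intro nn_integral_mono pointwise)
  also have "\<dots> = ennreal c1 * ball_deviation p \<phi> x r1 + ennreal c2 * ball_deviation p \<phi> y r2"
    unfolding ball_deviation_def by (subst nn_integral_add) (simp_all add: nn_integral_cmult)
  finally show ?thesis
    unfolding c1_def c2_def .
qed

lemma diff_powr_mult_Lambda_le:
  fixes \<phi> :: "'a::euclidean_space \<Rightarrow> real"
  assumes \<phi>: "Ck 1 \<phi>" and p: "1 < p" and "x \<noteq> y" and T: "T > 1"
  shows "ennreal (\<bar>\<phi> x - \<phi> y\<bar> powr p * (omega TYPE('a) * ((T - 1) * dist x y) ^ DIM('a)))
      * Lambda (0::'a) 1 s p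
    \<le> ennreal (dist x y powr (s * p) * ((T - 1) powr s + T powr s) powr p)
      * gagliardo_pow UNIV s p \<phi>"
proof -
  define R where "R = dist x y"
  define A where "A = (T - 1) powr s"
  define B where "B = T powr s"
  define c1 where "c1 = (A / (A + B)) powr (1 - p)"
  define c2 where "c2 = (B / (A + B)) powr (1 - p)"
  define G where "G = gagliardo_pow UNIV s p \<phi>"
  define \<Lambda> where "\<Lambda> = Lambda (0::'a) 1 s p"
  have R: "R > 0" using \<open>x \<noteq> y\<close> by (simp add: R_def)
  have AB: "A > 0" "B > 0" using T by (simp_all add: A_def B_def)
  have "1 - A / (A + B) = B / (A + B)" using AB by (simp add: field_simps)
  then have c2_def': "c2 = (1 - A / (A + B)) powr (1 - p)" by (simp add: c2_def)
  have ball_estimate: "\<Lambda> * ball_deviation p \<phi> c r \<le> ennreal (r powr (s * p)) * G" if "r > 0" for c r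
    unfolding \<Lambda>_def G_def
    using Lambda_mult_ball_deviation_le[OF \<phi> that, of p s c] p
      mult_left_mono[OF gagliardo_pow_mono[of "ball c r" UNIV s p \<phi>]] by (auto intro: order_trans)
  have "ennreal (\<bar>\<phi> x - \<phi> y\<bar> powr p * (omega TYPE('a) * ((T - 1) * R) ^ DIM('a))) * \<Lambda>
      \<le> (ennreal c1 * ball_deviation p \<phi> x ((T - 1) * R)
        + ennreal c2 * ball_deviation p \<phi> y (T * R)) * \<Lambda>"
    unfolding c1_def c2_def' using T R AB p Ck_continuous_on[OF \<phi>]
    by (intro mult_right_mono diff_powr_le_ball_deviations borel_measurable_continuous_onI)
       (auto simp: R_def algebra_simps)
  also have "\<dots> = ennreal c1 * (\<Lambda> * ball_deviation p \<phi> x ((T - 1) * R))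
      + ennreal c2 * (\<Lambda> * ball_deviation p \<phi> y (T * R))"
    by (simp add: algebra_simps)
  also have "\<dots> \<le> ennreal c1 * (ennreal (((T - 1) * R) powr (s * p)) * G)
      + ennreal c2 * (ennreal ((T * R) powr (s * p)) * G)"
    using T R by (intro add_mono mult_left_mono ball_estimate) auto
  also have "\<dots> = ennreal (c1 * ((T - 1) * R) powr (s * p) + c2 * (T * R) powr (s * p)) * G"
    by (simp add: c1_def c2_def ennreal_mult distrib_right mult.assoc)
  also have "c1 * ((T - 1) * R) powr (s * p) + c2 * (T * R) powr (s * p)
      = R powr (s * p) * (c1 * A powr p + c2 * B powr p)"
  proof -
    have "((T - 1) * R) powr (s * p) = A powr p * R powr (s * p)"
      "(T * R) powr (s * p) = B powr p * R powr (s * p)"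
      using T R unfolding A_def B_def by (simp_all add: powr_mult powr_powr)
    then show ?thesis
      by (simp add: algebra_simps)
  qed
  also have "c1 * A powr p + c2 * B powr p = (A + B) powr p"
    unfolding c1_def c2_def using weighted_powr_add_optimal[OF AB] .
  finally show ?thesis
    unfolding R_def[symmetric] A_def[symmetric] B_def[symmetric] G_def[symmetric] \<Lambda>_def[symmetric] .
qed

lemma holder_quotient_mult_Lambda_le:
  fixes \<phi> :: "'a::euclidean_space \<Rightarrow> real"
  assumes \<phi>: "Ck 1 \<phi>" and p: "1 < p" and "x \<noteq> y" and T: "T > 1"
  shows "ennreal ((\<bar>\<phi> x - \<phi> y\<bar> / dist x y powr alpha_sp TYPE('a) s p) powr p *
      (omega TYPE('a) * ((T - 1) ^ DIM('a) / ((T - 1) powr s + T powr s) powr p)))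
      * Lambda (0::'a) 1 s p
    \<le> gagliardo_pow UNIV s p \<phi>"
proof -
  define N where "N = DIM('a)"
  define R where "R = dist x y"
  define S where "S = (T - 1) powr s + T powr s"
  define Q where "Q = \<bar>\<phi> x - \<phi> y\<bar> powr p * (omega TYPE('a) * ((T - 1) * R) ^ N)"
  define C where "C = R powr (s * p) * S powr p"
  have R: "R > 0" using \<open>x \<noteq> y\<close> by (simp add: R_def)
  have "S > 0" unfolding S_def using T by (intro add_pos_pos) auto
  then have C: "C > 0" using R by (simp add: C_def)
  have "(\<bar>\<phi> x - \<phi> y\<bar> / R powr alpha_sp TYPE('a) s p) powr p
      = \<bar>\<phi> x - \<phi> y\<bar> powr p / R powr (s * p - N)"
    using R p by (simp add: alpha_sp_def N_def powr_divide powr_powr algebra_simps)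
  also have "R powr (s * p - N) = R powr (s * p) / R ^ N"
    using R by (simp add: powr_diff powr_realpow)
  finally have "(\<bar>\<phi> x - \<phi> y\<bar> / R powr alpha_sp TYPE('a) s p) powr p
      * (omega TYPE('a) * ((T - 1) ^ N / S powr p))
      = 1 / C * Q"
    using R by (simp add: Q_def C_def power_mult_distrib)
  moreover have "ennreal (1 / C * Q) = ennreal (1 / C) * ennreal Q"
    using C by (intro ennreal_mult') simp
  ultimately have "ennreal ((\<bar>\<phi> x - \<phi> y\<bar> / R powr alpha_sp TYPE('a) s p) powr p *
      (omega TYPE('a) * ((T - 1) ^ N / S powr p))) * Lambda (0::'a) 1 s p
      = ennreal (1 / C) * (ennreal Q * Lambda (0::'a) 1 s p)"
    by (simp only: mult.assoc)
  also have "\<dots> \<le> ennreal (1 / C) * (ennreal C * gagliardo_pow UNIV s p \<phi>)"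
    unfolding Q_def C_def R_def S_def N_def
    using diff_powr_mult_Lambda_le[OF assms] by (intro mult_left_mono) simp_all
  also have "\<dots> = gagliardo_pow UNIV s p \<phi>"
    using C by (simp add: mult.assoc[symmetric] ennreal_mult[symmetric])
  finally show ?thesis
    unfolding R_def S_def N_def .
qed

lemma holder_weight_mult_Lambda_le:
  fixes \<phi> :: "'a::euclidean_space \<Rightarrow> real"
  assumes \<phi>: "Ck 1 \<phi>" and holder: "1 \<le> holder_seminorm UNIV (alpha_sp TYPE('a) s p) \<phi>"
    and p: "1 < p" and T: "T > 1"
  shows "ennreal (omega TYPE('a) * ((T - 1) ^ DIM('a) / ((T - 1) powr s + T powr s) powr p))
      * Lambda (0::'a) 1 s p
    \<le> gagliardo_pow UNIV s p \<phi>"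
proof (rule ennreal_le_mult_one_interval)
  define W where "W = omega TYPE('a) * ((T - 1) ^ DIM('a) / ((T - 1) powr s + T powr s) powr p)"
  have W: "W \<ge> 0" using T omega_nonneg[where 'a='a] by (simp add: W_def)
  fix t :: real assume t: "0 < t" "t < 1"
  have "t powr (1 / p) < 1"
    using t p powr_less_mono2[of "1 / p" t 1] by simp
  then have "ennreal (t powr (1 / p)) < 1"
    by simp
  then have "ennreal (t powr (1 / p)) < holder_seminorm UNIV (alpha_sp TYPE('a) s p) \<phi>"
    using holder by (rule order_less_le_trans)
  then obtain x y where "x \<noteq> y"
    and "t powr (1 / p) < \<bar>\<phi> x - \<phi> y\<bar> / dist x y powr alpha_sp TYPE('a) s p" (is "_ < ?q")
    unfolding holder_seminorm_def less_SUP_iff by (auto simp: ennreal_less_iff)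
  then have "t \<le> ?q powr p"
    using t p powr_mono2[of p "t powr (1 / p)" ?q] by (simp add: powr_powr)
  then have "ennreal t * (ennreal W * Lambda (0::'a) 1 s p)
      \<le> ennreal (?q powr p * W) * Lambda (0::'a) 1 s p"
    using t W by (simp add: ennreal_mult[symmetric] mult.assoc[symmetric]
        mult_right_mono mult_right_mono[OF ennreal_leI])
  also have "\<dots> \<le> gagliardo_pow UNIV s p \<phi>"
    unfolding W_def by (rule holder_quotient_mult_Lambda_le[OF \<phi> p \<open>x \<noteq> y\<close> T])
  finally show "ennreal t * (ennreal W * Lambda (0::'a) 1 s p) \<le> gagliardo_pow UNIV s p \<phi>" .
qed

theorem theorem4p2:
  fixes s p :: real
  assumes "0 < s" "s < 1" "1 < p" "s * p > real DIM('a::euclidean_space)"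
  shows "ennreal (theta TYPE('a) s p) * Lambda (0::'a) 1 s p \<le> morrey_const TYPE('a) s p"
  unfolding morrey_const_def
proof (rule Inf_greatest, clarify)
  fix \<phi> :: "'a \<Rightarrow> real"
  assume "C_infty_0 \<phi>" and holder: "holder_seminorm UNIV (alpha_sp TYPE('a) s p) \<phi> = 1"
  then have \<phi>: "Ck 1 \<phi>"
    by (simp add: C_infty_0_def)
  define w where "w T = (T - 1) ^ DIM('a) / ((T - 1) powr s + T powr s) powr p" for T
  have \<omega>: "ennreal (omega TYPE('a) * c) = ennreal (omega TYPE('a)) * ennreal c" for c
    using omega_nonneg by (rule ennreal_mult')
  have "ennreal (SUP T\<in>{1<..}. w T) * (ennreal (omega TYPE('a)) * Lambda (0::'a) 1 s p)
      \<le> gagliardo_pow UNIV s p \<phi>"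
  proof (rule ennreal_SUP_mult_le)
    show "bdd_above (w ` {1<..})"
      using assms theta_weight_le_one unfolding w_def by (intro bdd_aboveI[of _ 1]) fastforce
    fix T :: real assume "T \<in> {1<..}"
    then have "ennreal (omega TYPE('a) * w T) * Lambda (0::'a) 1 s p \<le> gagliardo_pow UNIV s p \<phi>"
      unfolding w_def using holder assms by (intro holder_weight_mult_Lambda_le[OF \<phi>]) auto
    then show "ennreal (w T) * (ennreal (omega TYPE('a)) * Lambda (0::'a) 1 s p)
        \<le> gagliardo_pow UNIV s p \<phi>"
      by (simp only: \<omega> mult_ac)
  qed simp
  moreover have "theta TYPE('a) s p = omega TYPE('a) * (SUP T\<in>{1<..}. w T)"
    by (simp add: theta_def w_def)
  ultimately show "ennreal (theta TYPE('a) s p) * Lambda (0::'a) 1 s p \<le> gagliardo_pow UNIV s p \<phi>"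
    by (simp only: \<omega> mult_ac)
qed

end
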